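(* Let $g:\{\pm1\}^{m_1}\times\{\pm1\}^{m_2}\to\{\pm1\}$ and $g':\{\pm1\}^{m_1'}\times\{\pm1\}^{m_2'}\to\{\pm1\}$ be gadgets such that $\hat g(S,T)=0$ whenever $S=\emptyset$ or $T=\emptyset$, and likewise for $g'$. Then for all $k,d,n$, $$L_{1,k}(g,d,m_1,m_2,n)\le 2^{(m_1+m_2+m_1'+m_2')k/2}\,L_{1,k}(g',d,m_1',m_2',n).$$
   Context: $\hat g(S,T)=\mathbb{E}[g(\mathbf{x},\mathbf{y})\prod_{j\in S}\mathbf{x}_j\prod_{j\in T}\mathbf{y}_j]$ for uniform $\mathbf{x},\mathbf{y}$. For a randomized two-party protocol $\mathcal{C}:(\{\pm1\}^{m_1})^n\times(\{\pm1\}^{m_2})^n\to[-1,1]$ (value = expected output over internal randomness; inputs are $n$ blocks $x_i\in\{\pm1\}^{m_1}$, $y_i\in\{\pm1\}^{m_2}$), its $g$-fiber is $\mathcal{C}_{\downarrow g}(z)=\mathbb{E}[\mathcal{C}(\mathbf{x},\mathbf{y})\mid g(\mathbf{x}_i,\mathbf{y}_i)=z_i\ \forall i]$ for uniform $\mathbf{x},\mathbf{y}$. For $f:\{\pm1\}^n\to\mathbb{R}$, $L_{1,k}(f)=\sum_{|I|=k}|\hat f(I)|$. $L_{1,k}(g,d,m_1,m_2,n)$ denotes the supremum of $L_{1,k}(\mathcal{C}_{\downarrow g})$ over all such randomized protocols with at most $d$ bits of communication (and analogously for $g'$). *)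

theory Defs
  imports "HOL-Probability.Probability"
begin

definition cube :: "nat \<Rightarrow> (nat \<Rightarrow> real) set" where
  "cube m = PiE {..<m} (\<lambda>_. {-1, 1})"

definition blocks :: "nat \<Rightarrow> nat \<Rightarrow> (nat \<Rightarrow> nat \<Rightarrow> real) set" where
  "blocks n m = PiE {..<n} (\<lambda>_. cube m)"

definition gadget_coeff ::
  "((nat \<Rightarrow> real) \<Rightarrow> (nat \<Rightarrow> real) \<Rightarrow> real) \<Rightarrow> nat \<Rightarrow> nat \<Rightarrow> nat set \<Rightarrow> nat set \<Rightarrow> real" where
  "gadget_coeff g m1 m2 S T =
     (\<Sum>x\<in>cube m1. \<Sum>y\<in>cube m2. g x y * (\<Prod>j\<in>S. x j) * (\<Prod>j\<in>T. y j)) / (2 ^ m1 * 2 ^ m2)"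

definition fourier :: "nat \<Rightarrow> ((nat \<Rightarrow> real) \<Rightarrow> real) \<Rightarrow> nat set \<Rightarrow> real" where
  "fourier n f I = (\<Sum>z\<in>cube n. f z * (\<Prod>i\<in>I. z i)) / 2 ^ n"

definition L1k :: "nat \<Rightarrow> nat \<Rightarrow> ((nat \<Rightarrow> real) \<Rightarrow> real) \<Rightarrow> real" where
  "L1k n k f = (\<Sum>I\<in>{I. I \<subseteq> {..<n} \<and> card I = k}. \<bar>fourier n f I\<bar>)"

text \<open>Deterministic protocol trees: at an internal node one of the players sends a bit
  computed from her/his entire input; leaves carry an output value.\<close>
datatype ('a, 'b) proto =
    Leaf real
  | Alice "'a \<Rightarrow> bool" "('a, 'b) proto" "('a, 'b) proto"
  | Bob "'b \<Rightarrow> bool" "('a, 'b) proto" "('a, 'b) proto"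

fun run :: "('a, 'b) proto \<Rightarrow> 'a \<Rightarrow> 'b \<Rightarrow> real" where
  "run (Leaf v) x y = v"
| "run (Alice f l r) x y = (if f x then run l x y else run r x y)"
| "run (Bob f l r) x y = (if f y then run l x y else run r x y)"

fun cost :: "('a, 'b) proto \<Rightarrow> nat" where
  "cost (Leaf v) = 0"
| "cost (Alice f l r) = Suc (max (cost l) (cost r))"
| "cost (Bob f l r) = Suc (max (cost l) (cost r))"

fun leaves_ok :: "('a, 'b) proto \<Rightarrow> bool" where
  "leaves_ok (Leaf v) = (v \<in> {-1..1})"
| "leaves_ok (Alice f l r) = (leaves_ok l \<and> leaves_ok r)"
| "leaves_ok (Bob f l r) = (leaves_ok l \<and> leaves_ok r)"

text \<open>Value functions of randomized protocols with at most d bits of communication: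
  expected output over a random choice (internal randomness) of a deterministic protocol.\<close>
definition rand_protocols :: "nat \<Rightarrow> ('a \<Rightarrow> 'b \<Rightarrow> real) set" where
  "rand_protocols d = {C. \<exists>p :: ('a, 'b) proto pmf.
      (\<forall>P\<in>set_pmf p. cost P \<le> d \<and> leaves_ok P) \<and>
      C = (\<lambda>x y. measure_pmf.expectation p (\<lambda>P. run P x y))}"

definition fiber ::
  "((nat \<Rightarrow> real) \<Rightarrow> (nat \<Rightarrow> real) \<Rightarrow> real) \<Rightarrow> nat \<Rightarrow> nat \<Rightarrow> nat \<Rightarrow>
   ((nat \<Rightarrow> nat \<Rightarrow> real) \<Rightarrow> (nat \<Rightarrow> nat \<Rightarrow> real) \<Rightarrow> real) \<Rightarrow> (nat \<Rightarrow> real) \<Rightarrow> real" where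
  "fiber g m1 m2 n C z =
     (let E = {(x, y). x \<in> blocks n m1 \<and> y \<in> blocks n m2 \<and> (\<forall>i<n. g (x i) (y i) = z i)}
      in (\<Sum>(x, y)\<in>E. C x y) / real (card E))"

definition L1k_gadget ::
  "nat \<Rightarrow> ((nat \<Rightarrow> real) \<Rightarrow> (nat \<Rightarrow> real) \<Rightarrow> real) \<Rightarrow> nat \<Rightarrow> nat \<Rightarrow> nat \<Rightarrow> nat \<Rightarrow> real" where
  "L1k_gadget k g d m1 m2 n = (SUP C\<in>rand_protocols d. L1k n k (fiber g m1 m2 n C))"

definition is_gadget :: "((nat \<Rightarrow> real) \<Rightarrow> (nat \<Rightarrow> real) \<Rightarrow> real) \<Rightarrow> nat \<Rightarrow> nat \<Rightarrow> bool" where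
  "is_gadget g m1 m2 \<longleftrightarrow> (\<forall>x\<in>cube m1. \<forall>y\<in>cube m2. g x y \<in> {-1, 1})"

end

(*
  A g-protocol is turned into a g'-protocol of the same cost by simulating every block of g'
  inputs with one block of g inputs and shared randomness.  Since the coefficients of g and g'
  vanish whenever S or T is empty, averaging over the randomness multiplies the correlation of
  the protocol with the product of the gadget values over a set I of blocks by (c / W)^|I|,
  where c is a fixed coefficient of g' and W is the l1-mass of the coefficients of g.  For
  balanced gadgets the Fourier coefficients of fibers are exactly these correlations, so
  L_{1,k} of a g-fiber is (W / |c|)^k times L_{1,k} of a g'-fiber.  Parseval bounds W by
  2^((m1+m2)/2), and the largest coefficient of g' has |c| >= 2^(-(m1'+m2')/2).
*)

theory Submission
  imports Defs
begin

type_synonym gadget = "(nat \<Rightarrow> real) \<Rightarrow> (nat \<Rightarrow> real) \<Rightarrow> real"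
type_synonym block_fun = "(nat \<Rightarrow> nat \<Rightarrow> real) \<Rightarrow> (nat \<Rightarrow> nat \<Rightarrow> real) \<Rightarrow> real"

abbreviation chi :: "nat set \<Rightarrow> (nat \<Rightarrow> real) \<Rightarrow> real" where
  "chi S x \<equiv> \<Prod>j\<in>S. x j"

lemma finite_cube [simp]: "finite (cube m)"
  unfolding cube_def by (auto intro!: finite_PiE)

lemma card_cube: "card (cube m) = 2 ^ m"
  unfolding cube_def by (simp add: card_PiE numeral_2_eq_2)

lemma cube_nonempty: "cube m \<noteq> {}"
  unfolding cube_def by (simp add: PiE_eq_empty_iff)

lemma cube_coord: "x \<in> cube m \<Longrightarrow> j < m \<Longrightarrow> x j = -1 \<or> x j = 1"
  unfolding cube_def by auto

lemma cube_extensional: "x \<in> cube m \<Longrightarrow> x \<in> extensional {..<m}"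
  unfolding cube_def by (simp add: PiE_iff)

lemma chi_cube:
  assumes "x \<in> cube m" "S \<subseteq> {..<m}"
  shows "chi S x \<in> {-1, 1}"
proof -
  have "finite S"
    using assms(2) finite_subset by blast
  then show ?thesis
    using assms(2)
  proof (induction S rule: finite_induct)
    case (insert j S)
    then have "x j \<in> {-1, 1}" "chi S x \<in> {-1, 1}"
      using cube_coord[OF assms(1)] by auto
    then show ?case
      using insert(1,2) by auto
  qed simp
qed

lemma abs_chi_cube:
  assumes "x \<in> cube m" "S \<subseteq> {..<m}"
  shows "\<bar>chi S x\<bar> = 1"
  using chi_cube[OF assms] by auto

lemma sum_chi_cube:
  assumes "S \<subseteq> {..<m}"
  shows "(\<Sum>x\<in>cube m. chi S x) = (if S = {} then 2 ^ m else 0)"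
proof -
  have "(\<Sum>x\<in>cube m. chi S x) = (\<Sum>x\<in>cube m. \<Prod>j<m. if j \<in> S then x j else 1)"
    using assms by (intro sum.cong refl) (simp add: prod.If_cases Int_absorb1)
  also have "\<dots> = (\<Prod>j<m. \<Sum>t\<in>{-1, 1}. if j \<in> S then t else 1)"
    unfolding cube_def by (rule prod_sum_PiE[symmetric]) auto
  also have "\<dots> = (\<Prod>j<m. if j \<in> S then 0 else 2)"
    by (intro prod.cong) auto
  also have "\<dots> = (if S = {} then 2 ^ m else 0)"
    using assms by (auto simp: prod_zero_iff)
  finally show ?thesis .
qed

lemma sum_chi_chi_Pow:
  assumes "x \<in> cube m" "a \<in> cube m"
  shows "(\<Sum>S\<in>Pow {..<m}. chi S x * chi S a) = (if x = a then 2 ^ m else 0)"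
proof -
  have "(\<Sum>S\<in>Pow {..<m}. chi S x * chi S a) = (\<Sum>S\<in>Pow {..<m}. chi S (\<lambda>j. x j * a j) * (\<Prod>j\<in>{..<m}-S. 1))"
    by (simp add: prod.distrib)
  also have "\<dots> = (\<Prod>j<m. x j * a j + 1)"
    by (rule prod_add[symmetric]) simp
  also have "\<dots> = (if x = a then 2 ^ m else 0)"
  proof (cases "x = a")
    case True
    then have "(\<Prod>j<m. x j * a j + 1) = (\<Prod>j<m. 2)"
      by (intro prod.cong) (use cube_coord[OF assms(2)] in force)+
    then show ?thesis
      using True by simp
  next
    case False
    then obtain j where "x j \<noteq> a j" by auto
    moreover have "j < m"
      using calculation cube_extensional[OF assms(1)] cube_extensional[OF assms(2)]
      by (metis extensional_arb lessThan_iff)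
    ultimately show ?thesis
      using False cube_coord[OF assms(1)] cube_coord[OF assms(2)] by (force simp: prod_zero_iff)
  qed
  finally show ?thesis .
qed

definition flip :: "nat \<Rightarrow> (nat \<Rightarrow> real) \<Rightarrow> nat \<Rightarrow> real" where
  "flip j x = x(j := - x j)"

lemma flip_flip [simp]: "flip j (flip j x) = x"
  unfolding flip_def by auto

lemma flip_cube: "x \<in> cube m \<Longrightarrow> j < m \<Longrightarrow> flip j x \<in> cube m"
  unfolding cube_def flip_def by (auto simp: PiE_iff extensional_def)

lemma bij_flip_cube: "j < m \<Longrightarrow> bij_betw (flip j) (cube m) (cube m)"
  by (rule bij_betw_byWitness[where f' = "flip j"]) (auto simp: flip_cube)

lemma chi_flip:
  assumes "finite S" "j \<in> S"
  shows "chi S (flip j x) = - chi S x"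
proof -
  have "chi S (flip j x) = flip j x j * chi (S - {j}) (flip j x)"
    using assms by (simp add: prod.remove)
  also have "chi (S - {j}) (flip j x) = chi (S - {j}) x"
    by (rule prod.cong) (auto simp: flip_def)
  finally show ?thesis
    using assms by (simp add: flip_def prod.remove)
qed

definition fix_parity :: "(nat \<Rightarrow> real) \<Rightarrow> nat set \<Rightarrow> real \<Rightarrow> nat \<Rightarrow> real" where
  "fix_parity u S \<tau> = (if chi S u = \<tau> then u else flip (Min S) u)"

lemma fix_parity_cube:
  assumes "u \<in> cube m" "S \<subseteq> {..<m}" "S \<noteq> {}"
  shows "fix_parity u S \<tau> \<in> cube m"
proof -
  have "Min S \<in> S"
    using assms(2,3) finite_subset by (intro Min_in) auto
  then show ?thesis
    unfolding fix_parity_def using assms flip_cube by auto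
qed

lemma sum_fix_parity_indicator:
  assumes a: "a \<in> cube m" and S: "S \<subseteq> {..<m}" "S \<noteq> {}" and \<tau>: "\<tau> \<in> {-1, 1}"
  shows "(\<Sum>u\<in>cube m. if fix_parity u S \<tau> = a then 1 else 0) = 1 + \<tau> * chi S a"
proof -
  define j where "j = Min S"
  have fin: "finite S"
    using S(1) finite_subset by blast
  have j: "j \<in> S" "j < m"
    using S fin Min_in unfolding j_def by auto
  have "(if fix_parity u S \<tau> = a then 1 else 0)
      = (if chi S u = \<tau> \<and> u = a then 1 else 0) + (if chi S u \<noteq> \<tau> \<and> flip j u = a then 1 else (0::real))" for u
    by (auto simp: fix_parity_def j_def)
  then have "(\<Sum>u\<in>cube m. if fix_parity u S \<tau> = a then 1 else 0)
      = (\<Sum>u\<in>cube m. if chi S u = \<tau> \<and> u = a then 1 else 0)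
        + (\<Sum>u\<in>cube m. if chi S u \<noteq> \<tau> \<and> flip j u = a then 1 else (0::real))"
    by (simp add: sum.distrib)
  also have "(\<Sum>u\<in>cube m. if chi S u = \<tau> \<and> u = a then 1 else 0)
      = (\<Sum>u\<in>cube m. if u = a then (if chi S a = \<tau> then 1 else 0) else (0::real))"
    by (intro sum.cong) auto
  also have "\<dots> = (if chi S a = \<tau> then 1 else 0)"
    using a by simp
  also have "(\<Sum>u\<in>cube m. if chi S u \<noteq> \<tau> \<and> flip j u = a then 1 else 0)
      = (\<Sum>u\<in>cube m. if chi S (flip j u) \<noteq> \<tau> \<and> u = a then 1 else (0::real))"
    using sum.reindex_bij_betw[OF bij_flip_cube[OF j(2)],
        of "\<lambda>u. if chi S (flip j u) \<noteq> \<tau> \<and> u = a then 1 else (0::real)"]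
    by simp
  also have "\<dots> = (\<Sum>u\<in>cube m. if u = a then (if chi S a = \<tau> then 1 else 0) else 0)"
    using \<tau> chi_cube[OF a S(1)] chi_flip[OF fin j(1)] by (intro sum.cong) auto
  also have "\<dots> = (if chi S a = \<tau> then 1 else 0)"
    using a by simp
  finally show ?thesis
    using \<tau> chi_cube[OF a S(1)] by auto
qed

lemma sum_swap3: "(\<Sum>a\<in>A. \<Sum>b\<in>B. \<Sum>c\<in>C. f a b c) = (\<Sum>b\<in>B. \<Sum>c\<in>C. \<Sum>a\<in>A. f a b c)"
  by (subst sum.swap) (rule sum.cong[OF refl], rule sum.swap)

lemma sum_swap_outer_inner:
  "(\<Sum>x\<in>A. \<Sum>y\<in>B. \<Sum>s\<in>C. \<Sum>t\<in>D. F x y s t) = (\<Sum>s\<in>C. \<Sum>t\<in>D. \<Sum>x\<in>A. \<Sum>y\<in>B. F x y s t)"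
proof -
  have "(\<Sum>x\<in>A. \<Sum>y\<in>B. \<Sum>s\<in>C. \<Sum>t\<in>D. F x y s t) = (\<Sum>x\<in>A. \<Sum>s\<in>C. \<Sum>t\<in>D. \<Sum>y\<in>B. F x y s t)"
    by (intro sum.cong refl) (subst sum.swap, rule sum.cong, simp, rule sum.swap)
  also have "\<dots> = (\<Sum>s\<in>C. \<Sum>t\<in>D. \<Sum>x\<in>A. \<Sum>y\<in>B. F x y s t)"
    by (subst sum.swap, rule sum.cong, simp, rule sum.swap)
  finally show ?thesis .
qed

lemma prod_if_zero:
  fixes f :: "'a \<Rightarrow> 'b::comm_semiring_1"
  assumes "finite A"
  shows "(\<Prod>i\<in>A. if P i then f i else 0) = (if \<forall>i\<in>A. P i then prod f A else 0)"
proof (cases "\<forall>i\<in>A. P i")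
  case False
  then obtain j where "j \<in> A" "\<not> P j"
    by blast
  then have "(\<Prod>i\<in>A. if P i then f i else 0) = 0"
    using assms by (intro prod_zero) auto
  with False show ?thesis
    by (simp only: if_False)
qed (auto intro: prod.cong)

lemma prod_sum_sum_PiE:
  fixes F :: "'i \<Rightarrow> 'a \<Rightarrow> 'b \<Rightarrow> 'c::comm_semiring_1"
  assumes "finite K" "\<And>i. finite (A i)" "\<And>i. finite (B i)"
  shows "(\<Prod>i\<in>K. \<Sum>a\<in>A i. \<Sum>b\<in>B i. F i a b) = (\<Sum>x\<in>PiE K A. \<Sum>y\<in>PiE K B. \<Prod>i\<in>K. F i (x i) (y i))"
proof -
  have "(\<Prod>i\<in>K. \<Sum>a\<in>A i. \<Sum>b\<in>B i. F i a b) = (\<Sum>x\<in>PiE K A. \<Prod>i\<in>K. \<Sum>b\<in>B i. F i (x i) b)"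
    by (rule prod_sum_PiE) (use assms in auto)
  also have "\<dots> = (\<Sum>x\<in>PiE K A. \<Sum>y\<in>PiE K B. \<Prod>i\<in>K. F i (x i) (y i))"
    by (intro sum.cong refl prod_sum_PiE) (use assms in auto)
  finally show ?thesis .
qed

lemma sum_PiE_point:
  assumes "finite K" "\<And>i. finite (A i)" "\<And>i. i \<in> K \<Longrightarrow> v i \<in> A i"
  shows "(\<Sum>x\<in>PiE K A. if \<forall>i\<in>K. v i = x i then F x else 0) = F (restrict v K)"
proof -
  have "{x \<in> PiE K A. \<forall>i\<in>K. v i = x i} = {restrict v K}"
    using assms(3) by (auto simp: PiE_iff extensional_def fun_eq_iff)
  then show ?thesis
    using assms(1,2) by (simp add: sum.inter_filter[symmetric] finite_PiE)
qed

lemma sum_PiE_pair_point: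
  assumes "finite K" "finite A" "finite B" "\<And>i. i \<in> K \<Longrightarrow> u i \<in> A" "\<And>i. i \<in> K \<Longrightarrow> v i \<in> B"
  shows "(\<Sum>x\<in>PiE K (\<lambda>_. A). \<Sum>y\<in>PiE K (\<lambda>_. B).
            if (\<forall>i\<in>K. u i = x i) \<and> (\<forall>i\<in>K. v i = y i) then F x y else 0)
       = F (restrict u K) (restrict v K)"
proof -
  have "(\<Sum>y\<in>PiE K (\<lambda>_. B). if (\<forall>i\<in>K. u i = x i) \<and> (\<forall>i\<in>K. v i = y i) then F x y else 0)
      = (if \<forall>i\<in>K. u i = x i then F x (restrict v K) else 0)" for x
  proof -
    have "(\<Sum>y\<in>PiE K (\<lambda>_. B). if (\<forall>i\<in>K. u i = x i) \<and> (\<forall>i\<in>K. v i = y i) then F x y else 0)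
        = (\<Sum>y\<in>PiE K (\<lambda>_. B). if \<forall>i\<in>K. v i = y i then (if \<forall>i\<in>K. u i = x i then F x y else 0) else 0)"
      by (intro sum.cong) auto
    also have "\<dots> = (if \<forall>i\<in>K. u i = x i then F x (restrict v K) else 0)"
      by (rule sum_PiE_point) (use assms in auto)
    finally show ?thesis .
  qed
  then have "(\<Sum>x\<in>PiE K (\<lambda>_. A). \<Sum>y\<in>PiE K (\<lambda>_. B).
        if (\<forall>i\<in>K. u i = x i) \<and> (\<forall>i\<in>K. v i = y i) then F x y else 0)
      = (\<Sum>x\<in>PiE K (\<lambda>_. A). if \<forall>i\<in>K. u i = x i then F x (restrict v K) else 0)"
    by simp
  also have "\<dots> = F (restrict u K) (restrict v K)"
    by (rule sum_PiE_point) (use assms in auto)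
  finally show ?thesis .
qed

section \<open>Fourier coefficients of gadgets\<close>

lemma gadget_coeff_expansion:
  "(\<Sum>S\<in>Pow {..<m1}. \<Sum>T\<in>Pow {..<m2}. gadget_coeff g m1 m2 S T * F S T)
   = (\<Sum>x\<in>cube m1. \<Sum>y\<in>cube m2. g x y *
        (\<Sum>S\<in>Pow {..<m1}. \<Sum>T\<in>Pow {..<m2}. chi S x * chi T y * F S T)) / (2 ^ m1 * 2 ^ m2)"
proof -
  have "(\<Sum>S\<in>Pow {..<m1}. \<Sum>T\<in>Pow {..<m2}. gadget_coeff g m1 m2 S T * F S T)
      = (\<Sum>S\<in>Pow {..<m1}. \<Sum>T\<in>Pow {..<m2}. \<Sum>x\<in>cube m1. \<Sum>y\<in>cube m2.
           g x y * (chi S x * chi T y * F S T) / (2 ^ m1 * 2 ^ m2))"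
    unfolding gadget_coeff_def by (simp add: sum_divide_distrib sum_distrib_left sum_distrib_right mult_ac)
  also have "\<dots> = (\<Sum>x\<in>cube m1. \<Sum>y\<in>cube m2. \<Sum>S\<in>Pow {..<m1}. \<Sum>T\<in>Pow {..<m2}.
           g x y * (chi S x * chi T y * F S T) / (2 ^ m1 * 2 ^ m2))"
    by (rule sum_swap_outer_inner[symmetric])
  finally show ?thesis
    by (simp add: sum_divide_distrib sum_distrib_left)
qed

lemma gadget_inversion:
  assumes "a \<in> cube m1" "b \<in> cube m2"
  shows "(\<Sum>S\<in>Pow {..<m1}. \<Sum>T\<in>Pow {..<m2}. gadget_coeff g m1 m2 S T * (chi S a * chi T b)) = g a b"
proof -
  have "(\<Sum>y\<in>cube m2. g x y * (\<Sum>S\<in>Pow {..<m1}. \<Sum>T\<in>Pow {..<m2}. chi S x * chi T y * (chi S a * chi T b)))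
      = (if x = a then g a b * (2 ^ m1 * 2 ^ m2) else 0)" if "x \<in> cube m1" for x
  proof -
    have "(\<Sum>S\<in>Pow {..<m1}. \<Sum>T\<in>Pow {..<m2}. chi S x * chi T y * (chi S a * chi T b))
        = (\<Sum>S\<in>Pow {..<m1}. chi S x * chi S a) * (\<Sum>T\<in>Pow {..<m2}. chi T y * chi T b)" for y
      by (simp add: sum_product mult_ac)
    then have "(\<Sum>y\<in>cube m2. g x y * (\<Sum>S\<in>Pow {..<m1}. \<Sum>T\<in>Pow {..<m2}. chi S x * chi T y * (chi S a * chi T b)))
        = (\<Sum>y\<in>cube m2. if y = b then (if x = a then g a b * (2 ^ m1 * 2 ^ m2) else 0) else 0)"
      using assms that by (intro sum.cong refl) (auto simp: sum_chi_chi_Pow)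
    then show ?thesis
      using assms(2) by simp
  qed
  then show ?thesis
    using assms(1) by (simp add: gadget_coeff_expansion)
qed

lemma gadget_parseval:
  assumes "is_gadget g m1 m2"
  shows "(\<Sum>S\<in>Pow {..<m1}. \<Sum>T\<in>Pow {..<m2}. (gadget_coeff g m1 m2 S T)\<^sup>2) = 1"
proof -
  have "(\<Sum>S\<in>Pow {..<m1}. \<Sum>T\<in>Pow {..<m2}. (gadget_coeff g m1 m2 S T)\<^sup>2)
      = (\<Sum>x\<in>cube m1. \<Sum>y\<in>cube m2. g x y * g x y) / (2 ^ m1 * 2 ^ m2)"
    by (simp add: power2_eq_square gadget_coeff_expansion[where F="gadget_coeff g m1 m2"]
        gadget_inversion[symmetric] mult_ac)
  also have "(\<Sum>x\<in>cube m1. \<Sum>y\<in>cube m2. g x y * g x y) = (\<Sum>x\<in>cube m1. \<Sum>y\<in>cube m2. 1)"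
    using assms unfolding is_gadget_def by (intro sum.cong refl) fastforce
  finally show ?thesis
    by (simp add: card_cube)
qed

lemma gadget_coeff_mass_le:
  assumes "is_gadget g m1 m2"
  shows "(\<Sum>S\<in>Pow {..<m1}. \<Sum>T\<in>Pow {..<m2}. \<bar>gadget_coeff g m1 m2 S T\<bar>) \<le> sqrt (2 ^ m1 * 2 ^ m2)"
proof (rule real_le_rsqrt)
  let ?P = "Pow {..<m1} \<times> Pow {..<m2}"
  have "(\<Sum>S\<in>Pow {..<m1}. \<Sum>T\<in>Pow {..<m2}. \<bar>gadget_coeff g m1 m2 S T\<bar>)\<^sup>2
      = (\<Sum>(S, T)\<in>?P. 1 * \<bar>gadget_coeff g m1 m2 S T\<bar>)\<^sup>2"
    by (simp add: sum.cartesian_product)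
  also have "\<dots> \<le> (\<Sum>(S, T)\<in>?P. 1\<^sup>2) * (\<Sum>(S, T)\<in>?P. \<bar>gadget_coeff g m1 m2 S T\<bar>\<^sup>2)"
    using Cauchy_Schwarz_ineq_sum[of "\<lambda>_. 1" "\<lambda>(S, T). \<bar>gadget_coeff g m1 m2 S T\<bar>" ?P]
    by (simp add: case_prod_beta)
  also have "\<dots> = 2 ^ m1 * 2 ^ m2"
    using gadget_parseval[OF assms] by (simp add: sum.cartesian_product card_cartesian_product card_Pow)
  finally show "(\<Sum>S\<in>Pow {..<m1}. \<Sum>T\<in>Pow {..<m2}. \<bar>gadget_coeff g m1 m2 S T\<bar>)\<^sup>2 \<le> 2 ^ m1 * 2 ^ m2" .
qed

lemma gadget_large_coeff:
  assumes "is_gadget g m1 m2"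
  shows "\<exists>S\<subseteq>{..<m1}. \<exists>T\<subseteq>{..<m2}. 1 \<le> sqrt (2 ^ m1 * 2 ^ m2) * \<bar>gadget_coeff g m1 m2 S T\<bar>"
proof (rule ccontr)
  let ?P = "Pow {..<m1} \<times> Pow {..<m2}" and ?N = "(2::real) ^ m1 * 2 ^ m2"
  assume "\<not> ?thesis"
  then have small: "sqrt ?N * \<bar>gadget_coeff g m1 m2 S T\<bar> < 1" if "(S, T) \<in> ?P" for S T
    using that by (auto simp: not_le)
  have "?N * (gadget_coeff g m1 m2 S T)\<^sup>2 < 1" if "(S, T) \<in> ?P" for S T
  proof -
    have "(sqrt ?N * \<bar>gadget_coeff g m1 m2 S T\<bar>)\<^sup>2 < 1\<^sup>2"
      by (rule power_strict_mono) (simp_all add: small[OF that])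
    then show ?thesis
      by (simp add: power_mult_distrib)
  qed
  then have "(\<Sum>p\<in>?P. ?N * (case p of (S, T) \<Rightarrow> (gadget_coeff g m1 m2 S T)\<^sup>2)) < (\<Sum>p\<in>?P. 1)"
    by (intro sum_strict_mono) auto
  then have "?N * (\<Sum>(S, T)\<in>?P. (gadget_coeff g m1 m2 S T)\<^sup>2) < ?N"
    by (simp add: sum_distrib_left card_cartesian_product card_Pow)
  then show False
    using gadget_parseval[OF assms] by (simp add: sum.cartesian_product)
qed

lemma sum_character_weights:
  "(\<Sum>a\<in>cube m1. \<Sum>b\<in>cube m2. (1 + \<alpha> * chi S a) * (1 + \<beta> * chi T b) * G a b)
   = 2 ^ m1 * 2 ^ m2 * (gadget_coeff G m1 m2 {} {} + \<alpha> * gadget_coeff G m1 m2 S {}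
       + \<beta> * gadget_coeff G m1 m2 {} T + \<alpha> * \<beta> * gadget_coeff G m1 m2 S T)"
proof -
  have scaled: "(\<Sum>a\<in>cube m1. \<Sum>b\<in>cube m2. G a b * chi S0 a * chi T0 b)
      = 2 ^ m1 * 2 ^ m2 * gadget_coeff G m1 m2 S0 T0" for S0 T0
    unfolding gadget_coeff_def by simp
  have expand: "(1 + \<alpha> * chi S a) * (1 + \<beta> * chi T b) * G a b
      = G a b * chi {} a * chi {} b + \<alpha> * (G a b * chi S a * chi {} b)
        + \<beta> * (G a b * chi {} a * chi T b) + \<alpha> * \<beta> * (G a b * chi S a * chi T b)" for a b
    by (simp add: algebra_simps)
  show ?thesis
    unfolding expand sum.distrib sum_distrib_left[symmetric] scaled
    by (simp add: algebra_simps)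
qed

lemma gadget_coeff_one:
  assumes "S \<subseteq> {..<m1}" "T \<subseteq> {..<m2}"
  shows "gadget_coeff (\<lambda>_ _. 1) m1 m2 S T = (if S = {} \<and> T = {} then 1 else 0)"
proof -
  have "gadget_coeff (\<lambda>_ _. 1) m1 m2 S T = (\<Sum>x\<in>cube m1. chi S x) * (\<Sum>y\<in>cube m2. chi T y) / (2 ^ m1 * 2 ^ m2)"
    unfolding gadget_coeff_def by (simp add: sum_product)
  then show ?thesis
    using assms by (simp add: sum_chi_cube)
qed

definition nonempty_subsets :: "nat \<Rightarrow> nat set set" where
  "nonempty_subsets m = {S. S \<subseteq> {..<m} \<and> S \<noteq> {}}"

lemma finite_nonempty_subsets [simp]: "finite (nonempty_subsets m)"
  unfolding nonempty_subsets_def by simp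

lemma sum_Pow_nonempty_subsets:
  assumes "\<And>S T. S \<subseteq> {..<m1} \<Longrightarrow> T \<subseteq> {..<m2} \<Longrightarrow> S = {} \<or> T = {} \<Longrightarrow> X S T = 0"
  shows "(\<Sum>S\<in>Pow {..<m1}. \<Sum>T\<in>Pow {..<m2}. X S T)
       = (\<Sum>S\<in>nonempty_subsets m1. \<Sum>T\<in>nonempty_subsets m2. X S T)"
proof -
  have empty_T: "X S {} = 0" if "S \<subseteq> {..<m1}" for S
    using assms[OF that] by simp
  have empty_S: "(\<Sum>T\<in>nonempty_subsets m2. X {} T) = 0"
    using assms[of "{}"] by (intro sum.neutral) (simp add: nonempty_subsets_def)
  have "(\<Sum>S\<in>Pow {..<m1}. \<Sum>T\<in>Pow {..<m2}. X S T) = (\<Sum>S\<in>Pow {..<m1}. \<Sum>T\<in>nonempty_subsets m2. X S T)"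
    by (intro sum.cong refl sum.mono_neutral_right) (auto simp: nonempty_subsets_def empty_T)
  also have "\<dots> = (\<Sum>S\<in>nonempty_subsets m1. \<Sum>T\<in>nonempty_subsets m2. X S T)"
    by (intro sum.mono_neutral_right) (auto simp: nonempty_subsets_def empty_S[unfolded nonempty_subsets_def])
  finally show ?thesis .
qed

section \<open>Fibers of balanced gadgets\<close>

lemma finite_blocks [simp]: "finite (blocks n m)"
  unfolding blocks_def by (auto intro!: finite_PiE)

lemma blocks_cube: "x \<in> blocks n m \<Longrightarrow> i < n \<Longrightarrow> x i \<in> cube m"
  unfolding blocks_def by auto

lemma gadget_level_count:
  assumes "is_gadget g m1 m2" and "gadget_coeff g m1 m2 {} {} = 0" and "c = -1 \<or> c = 1"
  shows "(\<Sum>a\<in>cube m1. \<Sum>b\<in>cube m2. if g a b = c then 1 else 0 :: real) = 2 ^ m1 * 2 ^ m2 / 2"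
proof -
  have "(if g a b = c then 1 else 0) = (1 + c * g a b) / 2" if "a \<in> cube m1" "b \<in> cube m2" for a b
  proof -
    have "g a b = -1 \<or> g a b = 1"
      using assms(1) that unfolding is_gadget_def by blast
    then show ?thesis
      using assms(3) by auto
  qed
  then have "(\<Sum>a\<in>cube m1. \<Sum>b\<in>cube m2. if g a b = c then 1 else 0)
      = (\<Sum>a\<in>cube m1. \<Sum>b\<in>cube m2. (1 + c * g a b) / 2)"
    by (intro sum.cong refl) auto
  also have "\<dots> = (2 ^ m1 * 2 ^ m2 + c * (\<Sum>a\<in>cube m1. \<Sum>b\<in>cube m2. g a b)) / 2"
    by (simp add: sum.distrib sum_divide_distrib[symmetric] sum_distrib_left card_cube)
  also have "(\<Sum>a\<in>cube m1. \<Sum>b\<in>cube m2. g a b) = 0"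
    using assms(2) unfolding gadget_coeff_def by simp
  finally show ?thesis
    by simp
qed

definition fiber_set ::
  "gadget \<Rightarrow> nat \<Rightarrow> nat \<Rightarrow> nat \<Rightarrow> (nat \<Rightarrow> real) \<Rightarrow>
   ((nat \<Rightarrow> nat \<Rightarrow> real) \<times> (nat \<Rightarrow> nat \<Rightarrow> real)) set" where
  "fiber_set g m1 m2 n z = {(x, y). x \<in> blocks n m1 \<and> y \<in> blocks n m2 \<and> (\<forall>i<n. g (x i) (y i) = z i)}"

lemma sum_fiber_set:
  "(\<Sum>(x, y)\<in>fiber_set g m1 m2 n z. F x y)
   = (\<Sum>x\<in>blocks n m1. \<Sum>y\<in>blocks n m2. if \<forall>i<n. g (x i) (y i) = z i then F x y else 0)"
proof -
  have "fiber_set g m1 m2 n z = {p \<in> blocks n m1 \<times> blocks n m2. \<forall>i<n. g (fst p i) (snd p i) = z i}"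
    unfolding fiber_set_def by auto
  then show ?thesis
    by (simp add: sum.inter_filter sum.cartesian_product' cong: if_cong)
qed

lemma card_fiber_set:
  assumes "is_gadget g m1 m2" and "gadget_coeff g m1 m2 {} {} = 0" and "z \<in> cube n"
  shows "real (card (fiber_set g m1 m2 n z)) = (2 ^ m1 * 2 ^ m2 / 2) ^ n"
proof -
  let ?ind = "\<lambda>i a b. if g a b = z i then 1 else (0::real)"
  have "real (card (fiber_set g m1 m2 n z)) = (\<Sum>(x, y)\<in>fiber_set g m1 m2 n z. 1)"
    by simp
  also have "\<dots> = (\<Sum>x\<in>blocks n m1. \<Sum>y\<in>blocks n m2. \<Prod>i<n. ?ind i (x i) (y i))"
    unfolding sum_fiber_set by (simp add: prod_if_zero Ball_def cong: if_cong)
  also have "\<dots> = (\<Prod>i<n. \<Sum>a\<in>cube m1. \<Sum>b\<in>cube m2. ?ind i a b)"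
    unfolding blocks_def by (rule prod_sum_sum_PiE[symmetric]) auto
  also have "\<dots> = (\<Prod>i<n. 2 ^ m1 * 2 ^ m2 / 2)"
    using assms(1,2) cube_coord[OF assms(3)]
    by (intro prod.cong refl) (simp add: gadget_level_count)
  finally show ?thesis
    by simp
qed

lemma sum_cube_indicator_chi:
  assumes "\<forall>i<n. v i \<in> {-1, 1}" "I \<subseteq> {..<n}"
  shows "(\<Sum>z\<in>cube n. (if \<forall>i<n. v i = z i then c else 0) * chi I z) = c * (\<Prod>i\<in>I. v i)"
proof -
  have "(\<Sum>z\<in>cube n. (if \<forall>i<n. v i = z i then c else 0) * chi I z)
      = (\<Sum>z\<in>cube n. if \<forall>i\<in>{..<n}. v i = z i then c * chi I z else 0)"
    by (intro sum.cong) auto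
  also have "\<dots> = c * chi I (restrict v {..<n})"
    unfolding cube_def by (rule sum_PiE_point) (use assms(1) in auto)
  also have "chi I (restrict v {..<n}) = (\<Prod>i\<in>I. v i)"
    using assms(2) by (intro prod.cong) auto
  finally show ?thesis .
qed

definition correlation ::
  "gadget \<Rightarrow> nat \<Rightarrow> nat \<Rightarrow> nat \<Rightarrow> block_fun \<Rightarrow> nat set \<Rightarrow> real" where
  "correlation g m1 m2 n C I =
     (\<Sum>x\<in>blocks n m1. \<Sum>y\<in>blocks n m2. C x y * (\<Prod>i\<in>I. g (x i) (y i)))"

lemma fourier_fiber:
  assumes "is_gadget g m1 m2" and "gadget_coeff g m1 m2 {} {} = 0" and "I \<subseteq> {..<n}"
  shows "fourier n (fiber g m1 m2 n C) I = correlation g m1 m2 n C I / (2 ^ m1 * 2 ^ m2) ^ n"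
proof -
  let ?N = "(2::real) ^ m1 * 2 ^ m2"
  let ?F = "\<lambda>x y z. (if \<forall>i<n. g (x i) (y i) = z i then C x y else 0) * chi I z"
  have "fiber g m1 m2 n C z * chi I z = 2 ^ n / ?N ^ n * (\<Sum>x\<in>blocks n m1. \<Sum>y\<in>blocks n m2. ?F x y z)"
    if "z \<in> cube n" for z
  proof -
    have "fiber g m1 m2 n C z
        = (\<Sum>x\<in>blocks n m1. \<Sum>y\<in>blocks n m2. if \<forall>i<n. g (x i) (y i) = z i then C x y else 0) / (?N / 2) ^ n"
      using assms(1,2) that
      by (simp add: fiber_def fiber_set_def[symmetric] Let_def card_fiber_set sum_fiber_set)
    then show ?thesis
      by (simp only: power_divide sum_distrib_right[symmetric]) (simp add: field_simps)
  qed
  then have "fourier n (fiber g m1 m2 n C) I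
      = 2 ^ n / ?N ^ n * (\<Sum>z\<in>cube n. \<Sum>x\<in>blocks n m1. \<Sum>y\<in>blocks n m2. ?F x y z) / 2 ^ n"
    unfolding fourier_def by (simp add: sum_distrib_left)
  also have "\<dots> = (\<Sum>z\<in>cube n. \<Sum>x\<in>blocks n m1. \<Sum>y\<in>blocks n m2. ?F x y z) / ?N ^ n"
    by simp
  also have "(\<Sum>z\<in>cube n. \<Sum>x\<in>blocks n m1. \<Sum>y\<in>blocks n m2. ?F x y z)
      = (\<Sum>x\<in>blocks n m1. \<Sum>y\<in>blocks n m2. \<Sum>z\<in>cube n. ?F x y z)"
    by (subst sum.swap, rule sum.cong, simp, rule sum.swap)
  also have "\<dots> = correlation g m1 m2 n C I"
    unfolding correlation_def
  proof (intro sum.cong refl)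
    fix x y assume "x \<in> blocks n m1" "y \<in> blocks n m2"
    then have "\<forall>i<n. g (x i) (y i) \<in> {-1, 1}"
      using assms(1) blocks_cube unfolding is_gadget_def by blast
    then show "(\<Sum>z\<in>cube n. ?F x y z) = C x y * (\<Prod>i\<in>I. g (x i) (y i))"
      using assms(3) by (rule sum_cube_indicator_chi)
  qed
  finally show ?thesis .
qed

section \<open>Randomized protocols\<close>

fun map_proto :: "('c \<Rightarrow> 'a) \<Rightarrow> ('d \<Rightarrow> 'b) \<Rightarrow> ('a, 'b) proto \<Rightarrow> ('c, 'd) proto" where
  "map_proto \<phi> \<psi> (Leaf v) = Leaf v"
| "map_proto \<phi> \<psi> (Alice f l r) = Alice (f \<circ> \<phi>) (map_proto \<phi> \<psi> l) (map_proto \<phi> \<psi> r)"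
| "map_proto \<phi> \<psi> (Bob f l r) = Bob (f \<circ> \<psi>) (map_proto \<phi> \<psi> l) (map_proto \<phi> \<psi> r)"

lemma run_map_proto [simp]: "run (map_proto \<phi> \<psi> P) x y = run P (\<phi> x) (\<psi> y)"
  by (induction P) auto

lemma cost_map_proto [simp]: "cost (map_proto \<phi> \<psi> P) = cost P"
  by (induction P) auto

lemma leaves_ok_map_proto [simp]: "leaves_ok (map_proto \<phi> \<psi> P) = leaves_ok P"
  by (induction P) auto

lemma abs_run_le: "leaves_ok P \<Longrightarrow> \<bar>run P x y\<bar> \<le> 1"
  by (induction P) auto

text \<open>A protocol distribution may have infinite support; clamping the output to [-1, 1], which
  changes nothing on the support, makes the integrand bounded so that general integration lemmas apply.\<close>

lemma expectation_run_clamp: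
  assumes "\<forall>P\<in>set_pmf p. leaves_ok P"
  shows "measure_pmf.expectation p (\<lambda>P. run P x y)
       = measure_pmf.expectation p (\<lambda>P. max (-1) (min 1 (run P x y)))"
proof (rule integral_cong_AE)
  show "AE P in measure_pmf p. run P x y = max (- 1) (min 1 (run P x y))"
    unfolding AE_measure_pmf_iff using assms abs_run_le by (fastforce simp: abs_le_iff)
qed simp_all

lemma rand_protocols_abs_le:
  assumes "C \<in> rand_protocols d"
  shows "\<bar>C x y\<bar> \<le> 1"
proof -
  obtain p :: "('a, 'b) proto pmf" where p: "\<forall>P\<in>set_pmf p. cost P \<le> d \<and> leaves_ok P"
    and C: "C = (\<lambda>x y. measure_pmf.expectation p (\<lambda>P. run P x y))"
    using assms unfolding rand_protocols_def by blast
  let ?h = "\<lambda>P. max (-1) (min 1 (run P x y))"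
  have int: "integrable (measure_pmf p) ?h"
    by (rule measure_pmf.integrable_const_bound[where B = 1]) auto
  have "measure_pmf.expectation p ?h \<le> 1" "-1 \<le> measure_pmf.expectation p ?h"
    by (auto intro!: measure_pmf.integral_le_const measure_pmf.integral_ge_const int)
  then show ?thesis
    using p by (simp add: C expectation_run_clamp abs_le_iff)
qed

lemma zero_in_rand_protocols: "(\<lambda>x y. 0) \<in> rand_protocols d"
  unfolding rand_protocols_def by (rule CollectI, rule exI[where x = "return_pmf (Leaf 0)"]) auto

lemma ex_pmf_with_weights:
  assumes "finite R" "\<And>r. r \<in> R \<Longrightarrow> 0 \<le> w r" "(\<Sum>r\<in>R. w r) = 1"
  shows "\<exists>Q. set_pmf Q \<subseteq> R \<and> (\<forall>r\<in>R. pmf Q r = w r)"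
proof -
  define f where "f r = (if r \<in> R then w r else 0)" for r
  have f_nonneg: "0 \<le> f r" for r
    using assms(2) by (simp add: f_def)
  have "(\<integral>\<^sup>+r. ennreal (f r) \<partial>count_space UNIV) = (\<Sum>r\<in>R. ennreal (f r))"
    by (rule nn_integral_count_space') (auto simp: assms(1) f_def)
  also have "\<dots> = ennreal (\<Sum>r\<in>R. f r)"
    using f_nonneg by simp
  also have "(\<Sum>r\<in>R. f r) = 1"
    using assms(3) unfolding f_def by simp
  finally have f_integral: "(\<integral>\<^sup>+r. ennreal (f r) \<partial>count_space UNIV) = 1"
    by simp
  have "set_pmf (embed_pmf f) = {r. f r \<noteq> 0}"
    by (rule set_embed_pmf[OF f_nonneg f_integral])
  then have "set_pmf (embed_pmf f) \<subseteq> R"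
    unfolding f_def by (auto split: if_splits)
  moreover have "pmf (embed_pmf f) r = w r" if "r \<in> R" for r
    using pmf_embed_pmf[OF f_nonneg f_integral, of r] that unfolding f_def by simp
  ultimately show ?thesis
    by blast
qed

lemma rand_protocols_convex_comb:
  fixes \<phi> :: "'r \<Rightarrow> 'c \<Rightarrow> 'a" and \<psi> :: "'r \<Rightarrow> 'e \<Rightarrow> 'b"
  assumes R: "finite R" and w: "\<And>r. r \<in> R \<Longrightarrow> 0 \<le> w r" "(\<Sum>r\<in>R. w r) = 1"
    and C: "C \<in> rand_protocols d"
  shows "(\<lambda>x y. \<Sum>r\<in>R. w r * C (\<phi> r x) (\<psi> r y)) \<in> rand_protocols d"
proof -
  obtain p :: "('a, 'b) proto pmf" where p: "\<forall>P\<in>set_pmf p. cost P \<le> d \<and> leaves_ok P"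
    and Cp: "C = (\<lambda>x y. measure_pmf.expectation p (\<lambda>P. run P x y))"
    using C unfolding rand_protocols_def by blast
  obtain Q where Q: "set_pmf Q \<subseteq> R" "\<forall>r\<in>R. pmf Q r = w r"
    using ex_pmf_with_weights[OF R w] by blast
  define p' where "p' = bind_pmf Q (\<lambda>r. map_pmf (map_proto (\<phi> r) (\<psi> r)) p)"
  have p': "\<forall>P\<in>set_pmf p'. cost P \<le> d \<and> leaves_ok P"
    using p unfolding p'_def by auto
  have "measure_pmf.expectation p' (\<lambda>P. run P x y) = (\<Sum>r\<in>R. w r * C (\<phi> r x) (\<psi> r y))" for x y
  proof -
    let ?h = "\<lambda>P. max (-1) (min 1 (run P x y))"
    have "measure_pmf.expectation p' (\<lambda>P. run P x y) = measure_pmf.expectation p' ?h"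
      using p' by (intro expectation_run_clamp) blast
    also have "\<dots> = (\<integral>r. measure_pmf.expectation (map_pmf (map_proto (\<phi> r) (\<psi> r)) p) ?h \<partial>measure_pmf Q)"
      unfolding p'_def measure_pmf_bind
    proof (rule integral_bind[where K = "count_space UNIV" and B = 1 and B' = 1])
      show "(\<lambda>r. measure_pmf (map_pmf (map_proto (\<phi> r) (\<psi> r)) p))
          \<in> measurable (measure_pmf Q) (subprob_algebra (count_space UNIV))"
        by (subst measurable_cong_sets[OF sets_measure_pmf_count_space refl]) (rule measurable_measure_pmf)
    qed (auto simp: measure_pmf.emeasure_space_1 intro: measure_pmf.finite_measure_axioms)
    also have "\<dots> = (\<Sum>r\<in>R. pmf Q r *\<^sub>R measure_pmf.expectation (map_pmf (map_proto (\<phi> r) (\<psi> r)) p) ?h)"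
      using Q(1) by (intro integral_measure_pmf[OF R]) blast
    also have "\<dots> = (\<Sum>r\<in>R. w r * C (\<phi> r x) (\<psi> r y))"
    proof (rule sum.cong[OF refl])
      fix r assume "r \<in> R"
      have "measure_pmf.expectation (map_pmf (map_proto (\<phi> r) (\<psi> r)) p) ?h
          = measure_pmf.expectation p (\<lambda>P. max (-1) (min 1 (run P (\<phi> r x) (\<psi> r y))))"
        by simp
      also have "\<dots> = C (\<phi> r x) (\<psi> r y)"
        unfolding Cp by (rule expectation_run_clamp[symmetric]) (use p in blast)
      finally show "pmf Q r *\<^sub>R measure_pmf.expectation (map_pmf (map_proto (\<phi> r) (\<psi> r)) p) ?h
          = w r * C (\<phi> r x) (\<psi> r y)"
        using Q(2) \<open>r \<in> R\<close> by simp
    qed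
    finally show ?thesis .
  qed
  then have "(\<lambda>x y. \<Sum>r\<in>R. w r * C (\<phi> r x) (\<psi> r y)) = (\<lambda>x y. measure_pmf.expectation p' (\<lambda>P. run P x y))"
    by (intro ext) (rule sym)
  with p' show ?thesis
    unfolding rand_protocols_def mem_Collect_eq by (intro exI[where x = p'] conjI)
qed

lemma abs_fiber_le:
  assumes "\<And>x y. \<bar>C x y\<bar> \<le> 1"
  shows "\<bar>fiber g m1 m2 n C z\<bar> \<le> 1"
proof -
  define E where "E = {(x, y). x \<in> blocks n m1 \<and> y \<in> blocks n m2 \<and> (\<forall>i<n. g (x i) (y i) = z i)}"
  have "\<bar>\<Sum>p\<in>E. case_prod C p\<bar> \<le> (\<Sum>p\<in>E. \<bar>case_prod C p\<bar>)"
    by (rule sum_abs)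
  also have "\<dots> \<le> (\<Sum>p\<in>E. 1)"
    using assms by (intro sum_mono) (simp add: split_beta)
  finally have bound: "\<bar>\<Sum>p\<in>E. case_prod C p\<bar> \<le> real (card E)"
    by simp
  have "fiber g m1 m2 n C z = (\<Sum>p\<in>E. case_prod C p) / real (card E)"
    unfolding fiber_def E_def Let_def ..
  then show ?thesis
    using bound by (cases "card E = 0") (simp_all add: abs_divide divide_le_eq_1_pos)
qed

lemma abs_fourier_le:
  assumes "\<And>z. z \<in> cube n \<Longrightarrow> \<bar>f z\<bar> \<le> 1" and "I \<subseteq> {..<n}"
  shows "\<bar>fourier n f I\<bar> \<le> 1"
proof -
  have "\<bar>f z * chi I z\<bar> \<le> 1" if "z \<in> cube n" for z
    using assms(1)[OF that] abs_chi_cube[OF that assms(2)] by (simp add: abs_mult)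
  then have "\<bar>\<Sum>z\<in>cube n. f z * chi I z\<bar> \<le> (\<Sum>z\<in>cube n. 1)"
    by (intro order.trans[OF sum_abs] sum_mono)
  then show ?thesis
    unfolding fourier_def by (simp add: card_cube abs_divide)
qed

lemma L1k_nonneg: "0 \<le> L1k n k f"
  unfolding L1k_def by (intro sum_nonneg) simp

lemma L1k_fiber_le_card:
  assumes "C \<in> rand_protocols d"
  shows "L1k n k (fiber g m1 m2 n C) \<le> card {I. I \<subseteq> {..<n} \<and> card I = k}"
proof -
  have "\<bar>fourier n (fiber g m1 m2 n C) I\<bar> \<le> 1" if "I \<in> {I. I \<subseteq> {..<n} \<and> card I = k}" for I
    using that by (intro abs_fourier_le abs_fiber_le rand_protocols_abs_le[OF assms]) auto
  then have "L1k n k (fiber g m1 m2 n C) \<le> real (card {I. I \<subseteq> {..<n} \<and> card I = k}) * 1"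
    unfolding L1k_def by (rule sum_bounded_above)
  then show ?thesis
    by simp
qed

lemma L1k_gadget_le:
  assumes "0 \<le> M"
    and "\<And>C. C \<in> rand_protocols d \<Longrightarrow>
           \<exists>C'\<in>rand_protocols d. L1k n k (fiber g m1 m2 n C) \<le> M * L1k n k (fiber g' m1' m2' n C')"
  shows "L1k_gadget k g d m1 m2 n \<le> M * L1k_gadget k g' d m1' m2' n"
  unfolding L1k_gadget_def
proof (rule cSUP_least)
  show "rand_protocols d \<noteq> {}"
    using zero_in_rand_protocols by blast
  have bdd: "bdd_above ((\<lambda>C. L1k n k (fiber g' m1' m2' n C)) ` rand_protocols d)"
    by (rule bdd_aboveI2) (rule L1k_fiber_le_card)
  fix C :: block_fun
  assume "C \<in> rand_protocols d"
  then obtain C' where C': "C' \<in> rand_protocols d"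
    and le: "L1k n k (fiber g m1 m2 n C) \<le> M * L1k n k (fiber g' m1' m2' n C')"
    using assms(2) by blast
  note le
  also have "\<dots> \<le> M * (SUP C\<in>rand_protocols d. L1k n k (fiber g' m1' m2' n C))"
    using assms(1) by (intro mult_left_mono cSUP_upper[OF C' bdd])
  finally show "L1k n k (fiber g m1 m2 n C) \<le> M * (SUP C\<in>rand_protocols d. L1k n k (fiber g' m1' m2' n C))" .
qed

definition blockwise_mix ::
  "'r set \<Rightarrow> ('r \<Rightarrow> real) \<Rightarrow> ('r \<Rightarrow> 'c \<Rightarrow> 'a) \<Rightarrow> ('r \<Rightarrow> 'd \<Rightarrow> 'b) \<Rightarrow> nat \<Rightarrow>
   ((nat \<Rightarrow> 'a) \<Rightarrow> (nat \<Rightarrow> 'b) \<Rightarrow> real) \<Rightarrow> (nat \<Rightarrow> 'c) \<Rightarrow> (nat \<Rightarrow> 'd) \<Rightarrow> real" where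
  "blockwise_mix R w \<phi> \<psi> n C x y =
     (\<Sum>r\<in>PiE {..<n} (\<lambda>_. R).
        (\<Prod>i<n. w (r i)) * C (\<lambda>i\<in>{..<n}. \<phi> (r i) (x i)) (\<lambda>i\<in>{..<n}. \<psi> (r i) (y i)))"

definition transport ::
  "'r set \<Rightarrow> ('r \<Rightarrow> real) \<Rightarrow> ('r \<Rightarrow> 'c \<Rightarrow> 'a) \<Rightarrow> ('r \<Rightarrow> 'd \<Rightarrow> 'b) \<Rightarrow> 'c set \<Rightarrow> 'd set \<Rightarrow>
   ('c \<Rightarrow> 'd \<Rightarrow> real) \<Rightarrow> 'a \<Rightarrow> 'b \<Rightarrow> real" where
  "transport R w \<phi> \<psi> A' B' G a b =
     (\<Sum>r\<in>R. \<Sum>a'\<in>A'. \<Sum>b'\<in>B'. if \<phi> r a' = a \<and> \<psi> r b' = b then w r * G a' b' else 0)"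

lemma blockwise_mix_in_rand_protocols:
  assumes "finite R" "\<And>r. r \<in> R \<Longrightarrow> 0 \<le> w r" "(\<Sum>r\<in>R. w r) = 1" "C \<in> rand_protocols d"
  shows "blockwise_mix R w \<phi> \<psi> n C \<in> rand_protocols d"
proof -
  have "(\<Sum>r\<in>PiE {..<n} (\<lambda>_. R). \<Prod>i<n. w (r i)) = (\<Prod>i<n. \<Sum>r\<in>R. w r)"
    by (rule prod_sum_PiE[symmetric]) (use assms(1) in auto)
  then have weights: "(\<Sum>r\<in>PiE {..<n} (\<lambda>_. R). \<Prod>i<n. w (r i)) = 1"
    using assms(3) by simp
  have "blockwise_mix R w \<phi> \<psi> n C = (\<lambda>x y. \<Sum>r\<in>PiE {..<n} (\<lambda>_. R).
      (\<Prod>i<n. w (r i)) * C (\<lambda>i\<in>{..<n}. \<phi> (r i) (x i)) (\<lambda>i\<in>{..<n}. \<psi> (r i) (y i)))"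
    by (intro ext) (simp add: blockwise_mix_def)
  also have "\<dots> \<in> rand_protocols d"
  proof (rule rand_protocols_convex_comb[OF _ _ weights assms(4)])
    show "finite (PiE {..<n} (\<lambda>_. R))"
      using assms(1) by (simp add: finite_PiE)
    show "0 \<le> (\<Prod>i<n. w (r i))" if "r \<in> PiE {..<n} (\<lambda>_. R)" for r
      using that assms(2) by (auto intro: prod_nonneg)
  qed
  finally show ?thesis .
qed

lemma sum_blockwise_mix:
  fixes \<phi> :: "'r \<Rightarrow> 'c \<Rightarrow> 'a" and \<psi> :: "'r \<Rightarrow> 'd \<Rightarrow> 'b"
  assumes fin: "finite R" "finite A" "finite B" "finite A'" "finite B'"
    and maps: "\<And>r a'. r \<in> R \<Longrightarrow> a' \<in> A' \<Longrightarrow> \<phi> r a' \<in> A" "\<And>r b'. r \<in> R \<Longrightarrow> b' \<in> B' \<Longrightarrow> \<psi> r b' \<in> B"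
  shows "(\<Sum>x'\<in>PiE {..<n} (\<lambda>_. A'). \<Sum>y'\<in>PiE {..<n} (\<lambda>_. B').
            blockwise_mix R w \<phi> \<psi> n C x' y' * (\<Prod>i<n. G i (x' i) (y' i)))
       = (\<Sum>x\<in>PiE {..<n} (\<lambda>_. A). \<Sum>y\<in>PiE {..<n} (\<lambda>_. B).
            C x y * (\<Prod>i<n. transport R w \<phi> \<psi> A' B' (G i) (x i) (y i)))"
proof -
  let ?K = "{..<n}"
  let ?F = "\<lambda>x y i r a' b'. if \<phi> r a' = x i \<and> \<psi> r b' = y i then w r * G i a' b' else 0"
  have delta: "(\<Prod>i<n. w (r i)) * C (\<lambda>i\<in>?K. \<phi> (r i) (x' i)) (\<lambda>i\<in>?K. \<psi> (r i) (y' i)) * (\<Prod>i<n. G i (x' i) (y' i))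
      = (\<Sum>x\<in>PiE ?K (\<lambda>_. A). \<Sum>y\<in>PiE ?K (\<lambda>_. B). C x y * (\<Prod>i<n. ?F x y i (r i) (x' i) (y' i)))"
    if "r \<in> PiE ?K (\<lambda>_. R)" "x' \<in> PiE ?K (\<lambda>_. A')" "y' \<in> PiE ?K (\<lambda>_. B')" for r x' y'
  proof -
    let ?W = "(\<Prod>i<n. w (r i)) * (\<Prod>i<n. G i (x' i) (y' i))"
    have "C x y * (\<Prod>i<n. ?F x y i (r i) (x' i) (y' i)) = (if (\<forall>i\<in>?K. \<phi> (r i) (x' i) = x i) \<and>
        (\<forall>i\<in>?K. \<psi> (r i) (y' i) = y i) then C x y * ?W else 0)" for x y
      by (auto simp: prod_if_zero prod.distrib)
    then have "(\<Sum>x\<in>PiE ?K (\<lambda>_. A). \<Sum>y\<in>PiE ?K (\<lambda>_. B). C x y * (\<Prod>i<n. ?F x y i (r i) (x' i) (y' i)))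
        = (\<Sum>x\<in>PiE ?K (\<lambda>_. A). \<Sum>y\<in>PiE ?K (\<lambda>_. B). if (\<forall>i\<in>?K. \<phi> (r i) (x' i) = x i) \<and>
            (\<forall>i\<in>?K. \<psi> (r i) (y' i) = y i) then C x y * ?W else 0)"
      by (simp only:)
    also have "\<dots> = C (\<lambda>i\<in>?K. \<phi> (r i) (x' i)) (\<lambda>i\<in>?K. \<psi> (r i) (y' i)) * ?W"
      by (rule sum_PiE_pair_point) (use that fin maps in \<open>auto simp: PiE_iff\<close>)
    finally show ?thesis
      by (simp add: mult_ac)
  qed
  have "(\<Sum>x'\<in>PiE ?K (\<lambda>_. A'). \<Sum>y'\<in>PiE ?K (\<lambda>_. B'). blockwise_mix R w \<phi> \<psi> n C x' y' * (\<Prod>i<n. G i (x' i) (y' i)))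
      = (\<Sum>x'\<in>PiE ?K (\<lambda>_. A'). \<Sum>y'\<in>PiE ?K (\<lambda>_. B'). \<Sum>r\<in>PiE ?K (\<lambda>_. R).
           \<Sum>x\<in>PiE ?K (\<lambda>_. A). \<Sum>y\<in>PiE ?K (\<lambda>_. B). C x y * (\<Prod>i<n. ?F x y i (r i) (x' i) (y' i)))"
    unfolding blockwise_mix_def sum_distrib_right by (intro sum.cong refl) (simp add: delta)
  also have "\<dots> = (\<Sum>r\<in>PiE ?K (\<lambda>_. R). \<Sum>x'\<in>PiE ?K (\<lambda>_. A'). \<Sum>y'\<in>PiE ?K (\<lambda>_. B').
           \<Sum>x\<in>PiE ?K (\<lambda>_. A). \<Sum>y\<in>PiE ?K (\<lambda>_. B). C x y * (\<Prod>i<n. ?F x y i (r i) (x' i) (y' i)))"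
    by (rule sum_swap3[symmetric])
  also have "\<dots> = (\<Sum>r\<in>PiE ?K (\<lambda>_. R). \<Sum>x\<in>PiE ?K (\<lambda>_. A). \<Sum>y\<in>PiE ?K (\<lambda>_. B).
           \<Sum>x'\<in>PiE ?K (\<lambda>_. A'). \<Sum>y'\<in>PiE ?K (\<lambda>_. B'). C x y * (\<Prod>i<n. ?F x y i (r i) (x' i) (y' i)))"
    by (intro sum.cong refl sum_swap_outer_inner)
  also have "\<dots> = (\<Sum>x\<in>PiE ?K (\<lambda>_. A). \<Sum>y\<in>PiE ?K (\<lambda>_. B). C x y *
           (\<Sum>r\<in>PiE ?K (\<lambda>_. R). \<Sum>x'\<in>PiE ?K (\<lambda>_. A'). \<Sum>y'\<in>PiE ?K (\<lambda>_. B'). \<Prod>i<n. ?F x y i (r i) (x' i) (y' i)))"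
    by (subst sum_swap3) (simp add: sum_distrib_left)
  also have "\<dots> = (\<Sum>x\<in>PiE ?K (\<lambda>_. A). \<Sum>y\<in>PiE ?K (\<lambda>_. B).
           C x y * (\<Prod>i<n. transport R w \<phi> \<psi> A' B' (G i) (x i) (y i)))"
  proof (intro sum.cong refl arg_cong2[where f = "(*)"])
    fix x y
    have "(\<Prod>i<n. transport R w \<phi> \<psi> A' B' (G i) (x i) (y i))
        = (\<Sum>r\<in>PiE ?K (\<lambda>_. R). \<Prod>i<n. \<Sum>a'\<in>A'. \<Sum>b'\<in>B'. ?F x y i (r i) a' b')"
      unfolding transport_def using fin by (intro prod_sum_PiE) auto
    also have "\<dots> = (\<Sum>r\<in>PiE ?K (\<lambda>_. R). \<Sum>x'\<in>PiE ?K (\<lambda>_. A'). \<Sum>y'\<in>PiE ?K (\<lambda>_. B').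
        \<Prod>i<n. ?F x y i (r i) (x' i) (y' i))"
      using fin by (intro sum.cong refl prod_sum_sum_PiE) auto
    finally show "(\<Sum>r\<in>PiE ?K (\<lambda>_. R). \<Sum>x'\<in>PiE ?K (\<lambda>_. A'). \<Sum>y'\<in>PiE ?K (\<lambda>_. B').
        \<Prod>i<n. ?F x y i (r i) (x' i) (y' i)) = (\<Prod>i<n. transport R w \<phi> \<psi> A' B' (G i) (x i) (y i))"
      by (rule sym)
  qed
  finally show ?thesis .
qed

section \<open>Simulating one gadget by another\<close>

type_synonym shared_rand = "(nat set \<times> nat set) \<times> (nat \<Rightarrow> real) \<times> (nat \<Rightarrow> real)"

locale gadget_simulation =
  fixes g g' :: gadget
    and m1 m2 m1' m2' :: nat and S' T' :: "nat set"
  assumes gadget: "is_gadget g m1 m2" and gadget': "is_gadget g' m1' m2'"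
    and coeff_vanish: "\<And>S T. S \<subseteq> {..<m1} \<Longrightarrow> T \<subseteq> {..<m2} \<Longrightarrow> S = {} \<or> T = {} \<Longrightarrow>
           gadget_coeff g m1 m2 S T = 0"
    and coeff_vanish': "\<And>S T. S \<subseteq> {..<m1'} \<Longrightarrow> T \<subseteq> {..<m2'} \<Longrightarrow> S = {} \<or> T = {} \<Longrightarrow>
           gadget_coeff g' m1' m2' S T = 0"
    and S': "S' \<subseteq> {..<m1'}" "S' \<noteq> {}" and T': "T' \<subseteq> {..<m2'}" "T' \<noteq> {}"
begin

definition coeff_mass :: real where
  "coeff_mass = (\<Sum>S\<in>nonempty_subsets m1. \<Sum>T\<in>nonempty_subsets m2. \<bar>gadget_coeff g m1 m2 S T\<bar>)"

definition coeff_sign :: "nat set \<Rightarrow> nat set \<Rightarrow> real" where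
  "coeff_sign S T = (if gadget_coeff g m1 m2 S T < 0 then -1 else 1)"

definition pair_weight :: "nat set \<Rightarrow> nat set \<Rightarrow> real" where
  "pair_weight S T = \<bar>gadget_coeff g m1 m2 S T\<bar> / (coeff_mass * 2 ^ m1 * 2 ^ m2)"

text \<open>One block of g' is simulated by one block of g: the players share a random pair (S, T)
  of nonempty index sets, drawn with probability proportional to the absolute value of the
  coefficient of g at (S, T), and uniform points u, v; Alice then moves u so that chi S takes
  the value (sign of that coefficient) * chi S' a', and Bob moves v so that chi T takes the
  value chi T' b'.\<close>

definition block_rand :: "shared_rand set" where
  "block_rand = (nonempty_subsets m1 \<times> nonempty_subsets m2) \<times> (cube m1 \<times> cube m2)"

definition block_weight :: "shared_rand \<Rightarrow> real" where
  "block_weight = (\<lambda>((S, T), _). pair_weight S T)"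

definition alice_map :: "shared_rand \<Rightarrow> (nat \<Rightarrow> real) \<Rightarrow> nat \<Rightarrow> real" where
  "alice_map = (\<lambda>((S, T), u, _) a'. fix_parity u S (coeff_sign S T * chi S' a'))"

definition bob_map :: "shared_rand \<Rightarrow> (nat \<Rightarrow> real) \<Rightarrow> nat \<Rightarrow> real" where
  "bob_map = (\<lambda>((S, T), _, v) b'. fix_parity v T (chi T' b'))"

abbreviation block_transport :: "gadget \<Rightarrow> gadget" where
  "block_transport \<equiv> transport block_rand block_weight alice_map bob_map (cube m1') (cube m2')"

definition simulate :: "nat \<Rightarrow> block_fun \<Rightarrow> block_fun" where
  "simulate n = blockwise_mix block_rand block_weight alice_map bob_map n"

definition size_ratio :: real where
  "size_ratio = (2 ^ m1' * 2 ^ m2') / (2 ^ m1 * 2 ^ m2)"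

definition gain :: real where
  "gain = gadget_coeff g' m1' m2' S' T' / coeff_mass"

lemma coeff_mass_eq: "coeff_mass = (\<Sum>S\<in>Pow {..<m1}. \<Sum>T\<in>Pow {..<m2}. \<bar>gadget_coeff g m1 m2 S T\<bar>)"
  unfolding coeff_mass_def by (rule sum_Pow_nonempty_subsets[symmetric]) (simp add: coeff_vanish)

lemma inversion_nonempty_subsets:
  assumes "a \<in> cube m1" "b \<in> cube m2"
  shows "(\<Sum>S\<in>nonempty_subsets m1. \<Sum>T\<in>nonempty_subsets m2.
           gadget_coeff g m1 m2 S T * (chi S a * chi T b)) = g a b"
  using assms by (subst sum_Pow_nonempty_subsets[symmetric]) (auto simp: coeff_vanish gadget_inversion)

lemma coeff_mass_ge_1: "1 \<le> coeff_mass"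
proof -
  obtain a b where ab: "a \<in> cube m1" "b \<in> cube m2"
    using cube_nonempty by blast
  have "1 = \<bar>g a b\<bar>"
    using gadget ab unfolding is_gadget_def by force
  also have "\<dots> \<le> (\<Sum>S\<in>nonempty_subsets m1. \<Sum>T\<in>nonempty_subsets m2.
      \<bar>gadget_coeff g m1 m2 S T * (chi S a * chi T b)\<bar>)"
    unfolding inversion_nonempty_subsets[OF ab, symmetric]
    by (rule order.trans[OF sum_abs sum_mono[OF sum_abs]])
  also have "\<dots> = coeff_mass"
    unfolding coeff_mass_def
    using ab by (intro sum.cong refl) (auto simp: nonempty_subsets_def abs_mult abs_chi_cube)
  finally show ?thesis .
qed

lemma abs_mult_coeff_sign: "\<bar>gadget_coeff g m1 m2 S T\<bar> * coeff_sign S T = gadget_coeff g m1 m2 S T"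
  unfolding coeff_sign_def by simp

lemma sum_pair_weight:
  "(\<Sum>S\<in>nonempty_subsets m1. \<Sum>T\<in>nonempty_subsets m2. pair_weight S T) = 1 / (2 ^ m1 * 2 ^ m2)"
proof -
  have "(\<Sum>S\<in>nonempty_subsets m1. \<Sum>T\<in>nonempty_subsets m2. pair_weight S T)
      = coeff_mass / (coeff_mass * 2 ^ m1 * 2 ^ m2)"
    unfolding pair_weight_def coeff_mass_def by (simp add: sum_divide_distrib)
  then show ?thesis
    using coeff_mass_ge_1 by simp
qed

lemma finite_block_rand [simp]: "finite block_rand"
  unfolding block_rand_def by simp

lemma block_weight_nonneg: "0 \<le> block_weight \<rho>"
  using coeff_mass_ge_1 by (auto simp: block_weight_def pair_weight_def split: prod.splits)

lemma sum_block_weight: "(\<Sum>\<rho>\<in>block_rand. block_weight \<rho>) = 1"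
proof -
  have "(\<Sum>\<rho>\<in>block_rand. block_weight \<rho>)
      = (\<Sum>S\<in>nonempty_subsets m1. \<Sum>T\<in>nonempty_subsets m2. 2 ^ m1 * 2 ^ m2 * pair_weight S T)"
    unfolding block_rand_def block_weight_def
    by (simp add: sum.cartesian_product' card_cartesian_product card_cube mult.assoc)
  then show ?thesis
    by (simp add: sum_distrib_left[symmetric] sum_pair_weight)
qed

lemma alice_map_cube: "\<rho> \<in> block_rand \<Longrightarrow> alice_map \<rho> a' \<in> cube m1"
  by (auto simp: block_rand_def nonempty_subsets_def alice_map_def intro: fix_parity_cube)

lemma bob_map_cube: "\<rho> \<in> block_rand \<Longrightarrow> bob_map \<rho> b' \<in> cube m2"
  by (auto simp: block_rand_def nonempty_subsets_def bob_map_def intro: fix_parity_cube)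

lemma block_transport_eq:
  assumes a: "a \<in> cube m1" and b: "b \<in> cube m2"
  shows "block_transport G a b = (\<Sum>S\<in>nonempty_subsets m1. \<Sum>T\<in>nonempty_subsets m2. pair_weight S T *
           (\<Sum>a'\<in>cube m1'. \<Sum>b'\<in>cube m2'.
              (1 + coeff_sign S T * chi S a * chi S' a') * (1 + chi T b * chi T' b') * G a' b'))"
proof -
  have "(\<Sum>u\<in>cube m1. \<Sum>v\<in>cube m2. \<Sum>a'\<in>cube m1'. \<Sum>b'\<in>cube m2'.
          if alice_map ((S, T), u, v) a' = a \<and> bob_map ((S, T), u, v) b' = b
          then block_weight ((S, T), u, v) * G a' b' else 0)
      = pair_weight S T * (\<Sum>a'\<in>cube m1'. \<Sum>b'\<in>cube m2'.
             (1 + coeff_sign S T * chi S a * chi S' a') * (1 + chi T b * chi T' b') * G a' b')"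
    if "S \<in> nonempty_subsets m1" "T \<in> nonempty_subsets m2" for S T
  proof -
    let ?\<sigma> = "\<lambda>a'. coeff_sign S T * chi S' a'"
    have S: "S \<subseteq> {..<m1}" "S \<noteq> {}" and T: "T \<subseteq> {..<m2}" "T \<noteq> {}"
      using that by (auto simp: nonempty_subsets_def)
    have \<sigma>: "?\<sigma> a' \<in> {-1, 1}" if "a' \<in> cube m1'" for a'
      using chi_cube[OF that S'(1)] by (auto simp: coeff_sign_def)
    have "(\<Sum>u\<in>cube m1. \<Sum>v\<in>cube m2. \<Sum>a'\<in>cube m1'. \<Sum>b'\<in>cube m2'.
          if alice_map ((S, T), u, v) a' = a \<and> bob_map ((S, T), u, v) b' = b
          then block_weight ((S, T), u, v) * G a' b' else 0)
        = (\<Sum>a'\<in>cube m1'. \<Sum>b'\<in>cube m2'. \<Sum>u\<in>cube m1. \<Sum>v\<in>cube m2.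
          (if fix_parity u S (?\<sigma> a') = a then 1 else 0) * (if fix_parity v T (chi T' b') = b then 1 else 0)
            * (pair_weight S T * G a' b'))"
      by (subst sum_swap_outer_inner) (intro sum.cong refl, simp add: alice_map_def bob_map_def block_weight_def)
    also have "\<dots> = (\<Sum>a'\<in>cube m1'. \<Sum>b'\<in>cube m2'.
          (\<Sum>u\<in>cube m1. if fix_parity u S (?\<sigma> a') = a then 1 else 0)
          * (\<Sum>v\<in>cube m2. if fix_parity v T (chi T' b') = b then 1 else 0) * (pair_weight S T * G a' b'))"
      by (intro sum.cong refl) (subst sum_product, simp only: sum_distrib_right)
    also have "\<dots> = (\<Sum>a'\<in>cube m1'. \<Sum>b'\<in>cube m2'.
          (1 + ?\<sigma> a' * chi S a) * (1 + chi T' b' * chi T b) * (pair_weight S T * G a' b'))"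
      using a b S T \<sigma> chi_cube[OF _ T'(1)] by (intro sum.cong refl) (simp add: sum_fix_parity_indicator)
    finally show ?thesis
      by (simp add: sum_distrib_left mult_ac)
  qed
  then show ?thesis
    unfolding transport_def block_rand_def sum.cartesian_product'
    by (intro sum.cong refl) (simp cong: if_cong)
qed

lemma block_transport_gadget':
  assumes "a \<in> cube m1" "b \<in> cube m2"
  shows "block_transport g' a b = size_ratio * gain * g a b"
proof -
  have inner: "(\<Sum>a'\<in>cube m1'. \<Sum>b'\<in>cube m2'.
        (1 + coeff_sign S T * chi S a * chi S' a') * (1 + chi T b * chi T' b') * g' a' b')
      = 2 ^ m1' * 2 ^ m2' * (coeff_sign S T * chi S a * chi T b * gadget_coeff g' m1' m2' S' T')" for S T
  proof -
    have "gadget_coeff g' m1' m2' {} {} = 0" "gadget_coeff g' m1' m2' S' {} = 0"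
      "gadget_coeff g' m1' m2' {} T' = 0"
      using coeff_vanish'[of "{}" "{}"] coeff_vanish'[of S' "{}"] coeff_vanish'[of "{}" T'] S'(1) T'(1)
      by auto
    then show ?thesis
      by (subst sum_character_weights) simp
  qed
  have summand: "pair_weight S T * (2 ^ m1' * 2 ^ m2' * (coeff_sign S T * x * y * gadget_coeff g' m1' m2' S' T'))
      = size_ratio * gain * ((\<bar>gadget_coeff g m1 m2 S T\<bar> * coeff_sign S T) * (x * y))" for S T x y
    unfolding pair_weight_def size_ratio_def gain_def using coeff_mass_ge_1 by (simp add: field_simps)
  have "block_transport g' a b = (\<Sum>S\<in>nonempty_subsets m1. \<Sum>T\<in>nonempty_subsets m2.
      size_ratio * gain * (gadget_coeff g m1 m2 S T * (chi S a * chi T b)))"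
    unfolding block_transport_eq[OF assms] inner summand abs_mult_coeff_sign ..
  also have "\<dots> = size_ratio * gain * g a b"
    by (simp only: sum_distrib_left[symmetric] inversion_nonempty_subsets[OF assms])
  finally show ?thesis .
qed

lemma block_transport_one:
  assumes "a \<in> cube m1" "b \<in> cube m2"
  shows "block_transport (\<lambda>_ _. 1) a b = size_ratio"
proof -
  have inner: "(\<Sum>a'\<in>cube m1'. \<Sum>b'\<in>cube m2'.
        (1 + coeff_sign S T * chi S a * chi S' a') * (1 + chi T b * chi T' b') * 1) = 2 ^ m1' * 2 ^ m2'" for S T
    by (subst sum_character_weights) (simp add: gadget_coeff_one S' T')
  have "block_transport (\<lambda>_ _. 1) a b
      = 2 ^ m1' * 2 ^ m2' * (\<Sum>S\<in>nonempty_subsets m1. \<Sum>T\<in>nonempty_subsets m2. pair_weight S T)"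
    unfolding block_transport_eq[OF assms] inner by (simp add: sum_distrib_left mult_ac)
  then show ?thesis
    by (simp add: sum_pair_weight size_ratio_def)
qed

lemma simulate_in_rand_protocols: "C \<in> rand_protocols d \<Longrightarrow> simulate n C \<in> rand_protocols d"
  unfolding simulate_def
  by (rule blockwise_mix_in_rand_protocols) (simp_all add: block_weight_nonneg sum_block_weight)

lemma correlation_simulate:
  assumes "I \<subseteq> {..<n}"
  shows "correlation g' m1' m2' n (simulate n C) I = size_ratio ^ n * gain ^ card I * correlation g m1 m2 n C I"
proof -
  let ?G = "\<lambda>i a' b'. if i \<in> I then g' a' b' else 1"
  have prod_I: "(\<Prod>i\<in>I. F i) = (\<Prod>i<n. if i \<in> I then F i else 1)" for F :: "nat \<Rightarrow> real"
    using assms by (simp add: prod.inter_restrict[symmetric] Int_absorb1)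
  have "correlation g' m1' m2' n (simulate n C) I
      = (\<Sum>x'\<in>blocks n m1'. \<Sum>y'\<in>blocks n m2'. simulate n C x' y' * (\<Prod>i<n. ?G i (x' i) (y' i)))"
    unfolding correlation_def prod_I ..
  also have "\<dots> = (\<Sum>x\<in>blocks n m1. \<Sum>y\<in>blocks n m2. C x y * (\<Prod>i<n. block_transport (?G i) (x i) (y i)))"
    unfolding simulate_def blocks_def
    by (rule sum_blockwise_mix) (simp_all add: alice_map_cube bob_map_cube)
  also have "\<dots> = (\<Sum>x\<in>blocks n m1. \<Sum>y\<in>blocks n m2.
      C x y * (size_ratio ^ n * gain ^ card I * (\<Prod>i\<in>I. g (x i) (y i))))"
  proof (intro sum.cong refl arg_cong2[where f = "(*)"])
    fix x y assume x: "x \<in> blocks n m1" and y: "y \<in> blocks n m2"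
    have "block_transport (?G i) (x i) (y i) = size_ratio * (if i \<in> I then gain * g (x i) (y i) else 1)"
      if "i < n" for i
      using blocks_cube[OF x that] blocks_cube[OF y that]
      by (cases "i \<in> I") (simp_all add: block_transport_gadget' block_transport_one mult.assoc)
    then have "(\<Prod>i<n. block_transport (?G i) (x i) (y i))
        = (\<Prod>i<n. size_ratio * (if i \<in> I then gain * g (x i) (y i) else 1))"
      by (intro prod.cong) auto
    also have "\<dots> = size_ratio ^ n * gain ^ card I * (\<Prod>i\<in>I. g (x i) (y i))"
      by (simp add: prod.distrib prod_I[symmetric])
    finally show "(\<Prod>i<n. block_transport (?G i) (x i) (y i)) = size_ratio ^ n * gain ^ card I * (\<Prod>i\<in>I. g (x i) (y i))" .
  qed
  also have "\<dots> = size_ratio ^ n * gain ^ card I * correlation g m1 m2 n C I"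
    unfolding correlation_def by (simp add: sum_distrib_left mult_ac)
  finally show ?thesis .
qed

lemma fourier_fiber_simulate:
  assumes "I \<subseteq> {..<n}"
  shows "fourier n (fiber g' m1' m2' n (simulate n C)) I = gain ^ card I * fourier n (fiber g m1 m2 n C) I"
proof -
  have "gadget_coeff g m1 m2 {} {} = 0" "gadget_coeff g' m1' m2' {} {} = 0"
    using coeff_vanish[of "{}" "{}"] coeff_vanish'[of "{}" "{}"] by auto
  then show ?thesis
    using assms gadget gadget'
    by (simp add: fourier_fiber correlation_simulate size_ratio_def power_divide)
qed

lemma L1k_fiber_simulate:
  "L1k n k (fiber g' m1' m2' n (simulate n C)) = \<bar>gain\<bar> ^ k * L1k n k (fiber g m1 m2 n C)"
  unfolding L1k_def sum_distrib_left
  by (intro sum.cong refl) (simp add: fourier_fiber_simulate abs_mult power_abs)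

lemma one_le_gain:
  assumes "1 \<le> sqrt (2 ^ m1' * 2 ^ m2') * \<bar>gadget_coeff g' m1' m2' S' T'\<bar>"
  shows "1 \<le> sqrt (2 ^ m1 * 2 ^ m2) * sqrt (2 ^ m1' * 2 ^ m2') * \<bar>gain\<bar>"
proof -
  let ?c = "sqrt (2 ^ m1' * 2 ^ m2') * \<bar>gadget_coeff g' m1' m2' S' T'\<bar>"
  have "coeff_mass * ?c \<le> sqrt (2 ^ m1 * 2 ^ m2) * ?c"
    using gadget_coeff_mass_le[OF gadget] by (intro mult_right_mono) (simp_all add: coeff_mass_eq)
  then have "?c \<le> sqrt (2 ^ m1 * 2 ^ m2) * ?c / coeff_mass"
    using coeff_mass_ge_1 by (simp add: field_simps)
  also have "\<dots> = sqrt (2 ^ m1 * 2 ^ m2) * sqrt (2 ^ m1' * 2 ^ m2') * \<bar>gain\<bar>"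
    using coeff_mass_ge_1 by (simp add: gain_def abs_divide)
  finally show ?thesis
    using assms by linarith
qed

lemma L1k_fiber_le_simulate:
  assumes "1 \<le> sqrt (2 ^ m1' * 2 ^ m2') * \<bar>gadget_coeff g' m1' m2' S' T'\<bar>"
  shows "L1k n k (fiber g m1 m2 n C)
       \<le> (sqrt (2 ^ m1 * 2 ^ m2) * sqrt (2 ^ m1' * 2 ^ m2')) ^ k * L1k n k (fiber g' m1' m2' n (simulate n C))"
proof -
  let ?r = "sqrt (2 ^ m1 * 2 ^ m2) * sqrt (2 ^ m1' * 2 ^ m2')"
  have "1 * L1k n k (fiber g m1 m2 n C) \<le> (?r * \<bar>gain\<bar>) ^ k * L1k n k (fiber g m1 m2 n C)"
    by (rule mult_right_mono[OF one_le_power[OF one_le_gain[OF assms]] L1k_nonneg])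
  also have "\<dots> = ?r ^ k * L1k n k (fiber g' m1' m2' n (simulate n C))"
    by (simp add: L1k_fiber_simulate power_mult_distrib mult.assoc)
  finally show ?thesis
    by simp
qed

end

lemma sqrt_two_power_pow: "sqrt (2 ^ m) ^ k = 2 powr (real m * real k / 2)"
proof -
  have "sqrt (2 ^ m) = 2 powr (real m / 2)"
    by (simp add: powr_half_sqrt_powr powr_realpow)
  also have "\<dots> ^ k = 2 powr (real k * (real m / 2))"
    by (rule powr_power) simp
  finally show ?thesis
    by (simp add: mult.commute)
qed

theorem corollary7p7:
  fixes g g' :: "(nat \<Rightarrow> real) \<Rightarrow> (nat \<Rightarrow> real) \<Rightarrow> real"
    and m1 m2 m1' m2' k d n :: nat
  assumes "is_gadget g m1 m2" and "is_gadget g' m1' m2'"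
    and "\<And>S T. S \<subseteq> {..<m1} \<Longrightarrow> T \<subseteq> {..<m2} \<Longrightarrow> S = {} \<or> T = {} \<Longrightarrow>
           gadget_coeff g m1 m2 S T = 0"
    and "\<And>S T. S \<subseteq> {..<m1'} \<Longrightarrow> T \<subseteq> {..<m2'} \<Longrightarrow> S = {} \<or> T = {} \<Longrightarrow>
           gadget_coeff g' m1' m2' S T = 0"
  shows "L1k_gadget k g d m1 m2 n
           \<le> 2 powr (real (m1 + m2 + m1' + m2') * real k / 2) * L1k_gadget k g' d m1' m2' n"
proof -
  obtain S' T' where S'T': "S' \<subseteq> {..<m1'}" "T' \<subseteq> {..<m2'}"
    and large: "1 \<le> sqrt (2 ^ m1' * 2 ^ m2') * \<bar>gadget_coeff g' m1' m2' S' T'\<bar>"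
    using gadget_large_coeff[OF assms(2)] by blast
  then have "S' \<noteq> {}" "T' \<noteq> {}"
    using assms(4)[OF S'T'] by auto
  then interpret gadget_simulation g g' m1 m2 m1' m2' S' T'
    using assms S'T' by unfold_locales auto
  let ?r = "sqrt (2 ^ m1 * 2 ^ m2) * sqrt (2 ^ m1' * 2 ^ m2')"
  have r_pow: "?r ^ k = 2 powr (real (m1 + m2 + m1' + m2') * real k / 2)"
    using sqrt_two_power_pow[of "m1 + m2 + m1' + m2'" k] by (simp add: real_sqrt_mult[symmetric] power_add mult_ac)
  show ?thesis
  proof (rule L1k_gadget_le)
    fix C :: block_fun
    assume "C \<in> rand_protocols d"
    then show "\<exists>C'\<in>rand_protocols d. L1k n k (fiber g m1 m2 n C)
        \<le> 2 powr (real (m1 + m2 + m1' + m2') * real k / 2) * L1k n k (fiber g' m1' m2' n C')"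
      using L1k_fiber_le_simulate[OF large, of n k C] simulate_in_rand_protocols unfolding r_pow by blast
  qed simp
qed

end
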